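(* Let $k\ge1$ be an integer and $a>0$ a constant (playing the role of $F^{(k)}(0)$). For $c\in\mathbb R$ define \[ \psi(c)=\frac{\int_0^\infty x\exp\{cx-\frac{a}{(k+1)!}x^{k+1}\}dx}{\int_0^\infty \exp\{cx-\frac{a}{(k+1)!}x^{k+1}\}dx},\qquad b(c)=\sqrt{2\left|-c\,\psi(c)+\frac{a}{k!}\psi(c)^{k+1}\right|}. \] Then $\lim_{c\to-\infty}b(c)=\sqrt2$. *)

theory Defs
  imports "HOL-Analysis.Analysis"
begin

definition wfun :: "nat \<Rightarrow> real \<Rightarrow> real \<Rightarrow> real \<Rightarrow> real" where
  "wfun k a c x = exp (c * x - a / fact (k + 1) * x ^ (k + 1))"

definition psi :: "nat \<Rightarrow> real \<Rightarrow> real \<Rightarrow> real" where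
  "psi k a c = integral {0..} (\<lambda>x. x * wfun k a c x) / integral {0..} (\<lambda>x. wfun k a c x)"

definition bfun :: "nat \<Rightarrow> real \<Rightarrow> real \<Rightarrow> real" where
  "bfun k a c = sqrt (2 * \<bar>- c * psi k a c + a / fact k * psi k a c ^ (k + 1)\<bar>)"

end

theory Submission
  imports Defs "HOL-Probability.Distributions"
begin

text \<open>
  Write \<open>c = -t\<close> and \<open>C = a / (k+1)!\<close>, so the weight is \<open>exp (-t x - C x^(k+1))\<close>.
  Since \<open>1 - C x^(k+1) \<le> exp (-C x^(k+1)) \<le> 1\<close> on \<open>[0,\<infinity>)\<close>, comparison with the Gamma
  integrals \<open>\<integral> x^n exp (-t x) = n! / t^(n+1)\<close> shows that the \<open>n\<close>-th moment of the weight is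
  \<open>n! / t^(n+1) + O(t^-(n+k+2))\<close>. Hence \<open>t psi(-t) \<rightarrow> 1\<close> and \<open>psi(-t) \<rightarrow> 0\<close>, so the
  quantity under the root in \<open>bfun\<close> tends to \<open>2\<close>.
\<close>

lemma has_integral_power_mult_exp_neg:
  fixes t :: real
  assumes "t > 0"
  shows "((\<lambda>x. x ^ n * exp (- t * x)) has_integral fact n / t ^ (n + 1)) {0..}"
proof -
  have "(\<integral>\<^sup>+ x. ennreal (erlang_density 0 t x * x ^ n) \<partial>lborel) = ennreal (fact n / t ^ n)"
    using nn_integral_erlang_ith_moment[OF assms, of 0 n] by simp
  then have "((\<lambda>x. erlang_density 0 t x * x ^ n) has_integral fact n / t ^ n) UNIV"
    by (rule nn_integral_has_integral[rotated 2]) (use assms in \<open>auto simp: erlang_density_def\<close>)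
  moreover have "(\<lambda>x. erlang_density 0 t x * x ^ n) =
      (\<lambda>x. if x \<in> {0..} then t * (x ^ n * exp (- t * x)) else 0)"
    by (auto simp: erlang_density_def fun_eq_iff)
  ultimately have "((\<lambda>x. t * (x ^ n * exp (- t * x))) has_integral fact n / t ^ n) {0..}"
    by (simp only: has_integral_restrict_UNIV)
  then have "((\<lambda>x. 1 / t * (t * (x ^ n * exp (- t * x)))) has_integral 1 / t * (fact n / t ^ n)) {0..}"
    by (rule has_integral_mult_right)
  then show ?thesis
    using assms by (simp add: field_simps)
qed

lemma integrable_power_mult_exp_neg_poly:
  fixes t C :: real
  assumes "t > 0" and "C \<ge> 0"
  shows "(\<lambda>x. x ^ n * exp (- t * x - C * x ^ m)) integrable_on {0..}"
proof (rule measurable_bounded_by_integrable_imp_integrable)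
  show "(\<lambda>x. x ^ n * exp (- t * x - C * x ^ m)) \<in> borel_measurable (lebesgue_on {0..})"
    by (intro continuous_imp_measurable_on_sets_lebesgue continuous_intros) auto
  show "(\<lambda>x. x ^ n * exp (- t * x)) integrable_on {0..}"
    using has_integral_power_mult_exp_neg[OF \<open>t > 0\<close>] by blast
qed (use \<open>C \<ge> 0\<close> in \<open>auto intro!: mult_left_mono\<close>)

lemma integral_power_mult_exp_neg_poly_le:
  fixes t C :: real
  assumes "t > 0" and "C \<ge> 0"
  shows "integral {0..} (\<lambda>x. x ^ n * exp (- t * x - C * x ^ m)) \<le> fact n / t ^ (n + 1)"
proof (rule has_integral_le)
  show "((\<lambda>x. x ^ n * exp (- t * x - C * x ^ m)) has_integral
      integral {0..} (\<lambda>x. x ^ n * exp (- t * x - C * x ^ m))) {0..}"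
    using integrable_power_mult_exp_neg_poly[OF assms] by blast
qed (use assms has_integral_power_mult_exp_neg in \<open>auto intro!: mult_left_mono\<close>)

lemma integral_power_mult_exp_neg_poly_ge:
  fixes t C :: real
  assumes "t > 0" and "C \<ge> 0"
  shows "fact n / t ^ (n + 1) - C * (fact (n + m) / t ^ (n + m + 1))
    \<le> integral {0..} (\<lambda>x. x ^ n * exp (- t * x - C * x ^ m))"
proof (rule has_integral_le)
  show "((\<lambda>x. x ^ n * exp (- t * x) - C * (x ^ (n + m) * exp (- t * x))) has_integral
      fact n / t ^ (n + 1) - C * (fact (n + m) / t ^ (n + m + 1))) {0..}"
    by (intro has_integral_diff has_integral_mult_right has_integral_power_mult_exp_neg assms)
  show "((\<lambda>x. x ^ n * exp (- t * x - C * x ^ m)) has_integral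
      integral {0..} (\<lambda>x. x ^ n * exp (- t * x - C * x ^ m))) {0..}"
    using integrable_power_mult_exp_neg_poly[OF assms] by blast
  fix x :: real
  assume "x \<in> {0..}"
  have "x ^ n * exp (- t * x) - C * (x ^ (n + m) * exp (- t * x)) =
      x ^ n * exp (- t * x) * (1 - C * x ^ m)"
    by (simp add: algebra_simps power_add)
  also have "\<dots> \<le> x ^ n * exp (- t * x) * exp (- (C * x ^ m))"
    using \<open>x \<in> {0..}\<close> exp_ge_add_one_self[of "- (C * x ^ m)"] by (intro mult_left_mono) auto
  also have "\<dots> = x ^ n * exp (- t * x - C * x ^ m)"
    by (simp add: exp_diff exp_minus field_simps)
  finally show "x ^ n * exp (- t * x) - C * (x ^ (n + m) * exp (- t * x))
      \<le> x ^ n * exp (- t * x - C * x ^ m)" .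
qed

lemma tendsto_scaled_integral_power_mult_exp_neg_poly:
  fixes C :: real
  assumes "C \<ge> 0" and "m \<ge> 1"
  shows "((\<lambda>t. t ^ (n + 1) * integral {0..} (\<lambda>x. x ^ n * exp (- t * x - C * x ^ m)))
    \<longlongrightarrow> fact n) at_top"
proof (rule tendsto_sandwich)
  have "((\<lambda>t::real. fact n - C * fact (n + m) * inverse t ^ m) \<longlongrightarrow> fact n - C * fact (n + m) * 0 ^ m) at_top"
    by (intro tendsto_intros tendsto_inverse_0_at_top filterlim_ident)
  then show "((\<lambda>t::real. fact n - C * fact (n + m) * inverse t ^ m) \<longlongrightarrow> fact n) at_top"
    using \<open>m \<ge> 1\<close> by (simp add: power_0_left)
  show "\<forall>\<^sub>F t in at_top. fact n - C * fact (n + m) * inverse t ^ m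
      \<le> t ^ (n + 1) * integral {0..} (\<lambda>x. x ^ n * exp (- t * x - C * x ^ m))"
  proof (rule eventually_mono[OF eventually_gt_at_top[of 0]])
    fix t :: real
    assume "t > 0"
    have "fact n - C * fact (n + m) * inverse t ^ m =
        t ^ (n + 1) * (fact n / t ^ (n + 1) - C * (fact (n + m) / t ^ (n + m + 1)))"
      using \<open>t > 0\<close> by (simp add: field_simps power_add)
    also have "\<dots> \<le> t ^ (n + 1) * integral {0..} (\<lambda>x. x ^ n * exp (- t * x - C * x ^ m))"
      using \<open>t > 0\<close> integral_power_mult_exp_neg_poly_ge[OF \<open>t > 0\<close> \<open>C \<ge> 0\<close>]
      by (intro mult_left_mono) auto
    finally show "fact n - C * fact (n + m) * inverse t ^ m
        \<le> t ^ (n + 1) * integral {0..} (\<lambda>x. x ^ n * exp (- t * x - C * x ^ m))" .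
  qed
  show "\<forall>\<^sub>F t in at_top. t ^ (n + 1) * integral {0..} (\<lambda>x. x ^ n * exp (- t * x - C * x ^ m)) \<le> fact n"
  proof (rule eventually_mono[OF eventually_gt_at_top[of 0]])
    fix t :: real
    assume "t > 0"
    then have "t ^ (n + 1) * integral {0..} (\<lambda>x. x ^ n * exp (- t * x - C * x ^ m))
        \<le> t ^ (n + 1) * (fact n / t ^ (n + 1))"
      using integral_power_mult_exp_neg_poly_le[OF \<open>t > 0\<close> \<open>C \<ge> 0\<close>] by (intro mult_left_mono) auto
    then show "t ^ (n + 1) * integral {0..} (\<lambda>x. x ^ n * exp (- t * x - C * x ^ m)) \<le> fact n"
      using \<open>t > 0\<close> by simp
  qed
qed (rule tendsto_const)

lemma tendsto_psi_neg_mult_at_top: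
  assumes "a \<ge> 0"
  shows "((\<lambda>t. t * psi k a (- t)) \<longlongrightarrow> 1) at_top"
proof -
  define M where "M n t = integral {0..} (\<lambda>x. x ^ n * exp (- t * x - a / fact (k + 1) * x ^ (k + 1)))"
    for n :: nat and t :: real
  have moment: "((\<lambda>t. t ^ (n + 1) * M n t) \<longlongrightarrow> fact n) at_top" for n
    unfolding M_def using assms
    by (intro tendsto_scaled_integral_power_mult_exp_neg_poly) auto
  have "\<forall>\<^sub>F t in at_top. t ^ (1 + 1) * M 1 t / (t ^ (0 + 1) * M 0 t) = t * psi k a (- t)"
    by (rule eventually_mono[OF eventually_gt_at_top[of 0]])
      (simp add: psi_def wfun_def M_def power2_eq_square)
  moreover have "((\<lambda>t. t ^ (1 + 1) * M 1 t / (t ^ (0 + 1) * M 0 t)) \<longlongrightarrow> fact 1 / fact 0) at_top"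
    by (intro tendsto_divide moment) simp
  ultimately show ?thesis
    by (simp add: tendsto_cong)
qed

theorem lemma4:
  fixes k :: nat and a :: real
  assumes "k \<ge> 1" and "a > 0"
  shows "((\<lambda>c. bfun k a c) \<longlongrightarrow> sqrt 2) at_bot"
proof -
  have scaled: "((\<lambda>t. t * psi k a (- t)) \<longlongrightarrow> 1) at_top"
    using \<open>a > 0\<close> by (intro tendsto_psi_neg_mult_at_top) simp
  have "((\<lambda>t. t * psi k a (- t) * inverse t) \<longlongrightarrow> 1 * 0) at_top"
    by (intro tendsto_mult scaled tendsto_inverse_0_at_top filterlim_ident)
  moreover have "\<forall>\<^sub>F t in at_top. t * psi k a (- t) * inverse t = psi k a (- t)"
    by (rule eventually_mono[OF eventually_gt_at_top[of 0]]) simp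
  ultimately have vanishing: "((\<lambda>t. psi k a (- t)) \<longlongrightarrow> 0) at_top"
    by (simp add: tendsto_cong)
  have "((\<lambda>t. sqrt (2 * \<bar>t * psi k a (- t) + a / fact k * psi k a (- t) ^ (k + 1)\<bar>))
      \<longlongrightarrow> sqrt (2 * \<bar>1 + a / fact k * 0 ^ (k + 1)\<bar>)) at_top"
    by (intro tendsto_intros scaled vanishing)
  moreover have "sqrt (2 * \<bar>1 + a / fact k * 0 ^ (k + 1)\<bar>) = sqrt 2"
    by simp
  ultimately show ?thesis
    by (simp only: filterlim_at_bot_mirror bfun_def minus_minus)
qed

end
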